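(* Let $(X_k)_{k\ge1}$ be a random walk on a finite vertex set $V$ (possibly non-Markovian and non-stationary) with $X_1\sim\pi$, and assume $C(\pi,V)<\infty$. Then $S\mapsto C(\pi,S)$ (with $C(\pi,\emptyset)=0$) is nondecreasing and submodular on $2^V$: $C(\pi,S)\le C(\pi,T)$ for $S\subseteq T$, and $C(\pi,S\cup\{v\})-C(\pi,S)\ge C(\pi,T\cup\{v\})-C(\pi,T)$ for all $S\subseteq T\subseteq V$ and $v\in V\setminus T$.
   Context: A random walk on $V$ is a discrete-time random process $X_1,X_2,\dots$ with values in $V$ whose law is given by arbitrary conditional distributions $\Pr(X_k=\cdot\mid X_1,\dots,X_{k-1})$. For nonempty $S\subseteq V$, $\phi(S)=\min\{k:\ \forall s\in S\ \exists j\le k \text{ with } X_j=s\}$, and the cover time is $C(\pi,S)=\mathbf{E}[\phi(S)]$ when $X_1\sim\pi$. *)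

theory Defs
  imports "HOL-Probability.Probability"
begin

text \<open>A random walk on V is an arbitrary discrete-time process X 1, X 2, ... with values
  in V (index 0 is unused).\<close>

definition cover_index :: "(nat \<Rightarrow> 'w \<Rightarrow> 'v) \<Rightarrow> 'v set \<Rightarrow> 'w \<Rightarrow> ennreal" where
  "cover_index X S \<omega> =
     (if \<exists>k\<ge>1. \<forall>s\<in>S. \<exists>j\<in>{1..k}. X j \<omega> = s
      then of_nat (LEAST k. k \<ge> 1 \<and> (\<forall>s\<in>S. \<exists>j\<in>{1..k}. X j \<omega> = s))
      else \<infinity>)"

definition cover_time :: "'w measure \<Rightarrow> (nat \<Rightarrow> 'w \<Rightarrow> 'v) \<Rightarrow> 'v set \<Rightarrow> ennreal" where
  "cover_time M X S = (if S = {} then 0 else \<integral>\<^sup>+ \<omega>. cover_index X S \<omega> \<partial>M)"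

end

theory Submission
  imports Defs
begin

text \<open>Along every trajectory the cover index of S \<union> U is the maximum of the cover indices of
  S and U, and for s \<le> t one has max t u + s \<le> max s u + t. Together these give monotonicity
  and submodularity of the cover index pointwise, and integration transfers both to the cover
  time. Finiteness of C(\<pi>,V) only serves to make the real-valued differences meaningful.\<close>

definition covered_by :: "(nat \<Rightarrow> 'w \<Rightarrow> 'v) \<Rightarrow> 'v set \<Rightarrow> nat \<Rightarrow> 'w \<Rightarrow> bool" where
  "covered_by X S k \<omega> \<longleftrightarrow> k \<ge> 1 \<and> (\<forall>s\<in>S. \<exists>j\<in>{1..k}. X j \<omega> = s)"

lemma covered_by_mono:
  "covered_by X S k \<omega> \<Longrightarrow> S' \<subseteq> S \<Longrightarrow> k \<le> k' \<Longrightarrow> covered_by X S' k' \<omega>"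
  unfolding covered_by_def by (meson atLeastAtMost_iff order_trans subsetD)

lemma covered_by_Un:
  "covered_by X (S \<union> T) k \<omega> \<longleftrightarrow> covered_by X S k \<omega> \<and> covered_by X T k \<omega>"
  unfolding covered_by_def by blast

lemma sets_covered_by:
  assumes X: "\<And>j. j \<ge> 1 \<Longrightarrow> X j \<in> M \<rightarrow>\<^sub>M count_space V" and "finite S"
  shows "{\<omega> \<in> space M. covered_by X S k \<omega>} \<in> sets M"
proof -
  have visit: "Measurable.pred M (\<lambda>\<omega>. X j \<omega> = s)" if "j \<in> {1..k}" for j s
    by (rule pred_eq_const1[where N="count_space V"]) (use that X in auto)
  have "Measurable.pred M (covered_by X S k)"
    unfolding covered_by_def using \<open>finite S\<close> visit
    by (intro pred_intros_logic pred_intros_finite(3) pred_intros_countable_bounded(4)) auto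
  then show ?thesis
    by (simp add: pred_def)
qed

lemma cover_index_le:
  assumes "covered_by X S k \<omega>"
  shows "cover_index X S \<omega> \<le> of_nat k"
proof -
  have "cover_index X S \<omega> = of_nat (LEAST k. covered_by X S k \<omega>)"
    using assms unfolding cover_index_def covered_by_def by auto
  also have "\<dots> \<le> of_nat k"
    using assms by (simp add: Least_le)
  finally show ?thesis .
qed

lemma cover_index_finiteE:
  assumes "cover_index X S \<omega> < \<infinity>"
  obtains k where "covered_by X S k \<omega>" and "cover_index X S \<omega> = of_nat k"
proof -
  have ex: "\<exists>k. covered_by X S k \<omega>"
    using assms unfolding cover_index_def covered_by_def by (auto split: if_splits)
  then have "cover_index X S \<omega> = of_nat (LEAST k. covered_by X S k \<omega>)"
    unfolding cover_index_def covered_by_def by auto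
  with LeastI_ex[OF ex] show thesis
    using that by blast
qed

lemma cover_index_Un:
  "cover_index X (S \<union> T) \<omega> = max (cover_index X S \<omega>) (cover_index X T \<omega>)"
proof (rule antisym)
  show "cover_index X (S \<union> T) \<omega> \<le> max (cover_index X S \<omega>) (cover_index X T \<omega>)"
  proof (cases "cover_index X S \<omega> < \<infinity> \<and> cover_index X T \<omega> < \<infinity>")
    case True
    then obtain a b where a: "covered_by X S a \<omega>" "cover_index X S \<omega> = of_nat a"
      and b: "covered_by X T b \<omega>" "cover_index X T \<omega> = of_nat b"
      by (meson cover_index_finiteE)
    have "covered_by X (S \<union> T) (max a b) \<omega>"
      using a(1) b(1) by (auto simp: covered_by_Un intro: covered_by_mono)
    then have "cover_index X (S \<union> T) \<omega> \<le> of_nat (max a b)"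
      by (rule cover_index_le)
    then show ?thesis
      by (simp add: a(2) b(2) of_nat_max)
  qed (auto simp: max_def not_less top_unique)
  show "max (cover_index X S \<omega>) (cover_index X T \<omega>) \<le> cover_index X (S \<union> T) \<omega>"
  proof (cases "cover_index X (S \<union> T) \<omega> < \<infinity>")
    case True
    then obtain k where "covered_by X (S \<union> T) k \<omega>" "cover_index X (S \<union> T) \<omega> = of_nat k"
      by (rule cover_index_finiteE)
    then show ?thesis
      by (simp add: covered_by_Un cover_index_le)
  qed (simp add: not_less top_unique)
qed

lemma cover_index_eq_INF:
  "cover_index X S \<omega> = (INF k. if covered_by X S k \<omega> then of_nat k else \<infinity>)"
proof (rule antisym)
  show "cover_index X S \<omega> \<le> (INF k. if covered_by X S k \<omega> then of_nat k else \<infinity>)"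
    by (rule INF_greatest) (simp add: cover_index_le)
  show "(INF k. if covered_by X S k \<omega> then of_nat k else \<infinity>) \<le> cover_index X S \<omega>"
  proof (cases "cover_index X S \<omega> < \<infinity>")
    case True
    then obtain k where "covered_by X S k \<omega>" "cover_index X S \<omega> = of_nat k"
      by (rule cover_index_finiteE)
    then show ?thesis
      by (metis (mono_tags, lifting) INF_lower UNIV_I)
  qed (simp add: not_less top_unique)
qed

lemma borel_measurable_cover_index:
  assumes "\<And>j. j \<ge> 1 \<Longrightarrow> X j \<in> M \<rightarrow>\<^sub>M count_space V" and "finite S"
  shows "cover_index X S \<in> borel_measurable M"
  unfolding cover_index_eq_INF[abs_def]
  using sets_covered_by[OF assms] by (intro borel_measurable_INF measurable_If) auto

text \<open>Since cover_index X {} \<omega> = 1, the convention C(\<pi>,\<emptyset>) = 0 has to be built into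
  the integrand.\<close>

definition cover_phi :: "(nat \<Rightarrow> 'w \<Rightarrow> 'v) \<Rightarrow> 'v set \<Rightarrow> 'w \<Rightarrow> ennreal" where
  "cover_phi X S \<omega> = (if S = {} then 0 else cover_index X S \<omega>)"

lemma cover_time_eq_nn_integral: "cover_time M X S = (\<integral>\<^sup>+ \<omega>. cover_phi X S \<omega> \<partial>M)"
  unfolding cover_time_def cover_phi_def by simp

lemma cover_phi_Un: "cover_phi X (S \<union> T) \<omega> = max (cover_phi X S \<omega>) (cover_phi X T \<omega>)"
  unfolding cover_phi_def by (cases "S = {}"; cases "T = {}") (simp_all add: cover_index_Un)

lemma cover_phi_mono: "S \<subseteq> T \<Longrightarrow> cover_phi X S \<omega> \<le> cover_phi X T \<omega>"
  by (metis cover_phi_Un max.cobounded1 sup.absorb2)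

lemma borel_measurable_cover_phi:
  assumes "\<And>j. j \<ge> 1 \<Longrightarrow> X j \<in> M \<rightarrow>\<^sub>M count_space V" and "finite S"
  shows "cover_phi X S \<in> borel_measurable M"
  unfolding cover_phi_def[abs_def] using borel_measurable_cover_index[OF assms] by simp

lemma max_add_le:
  fixes s t u :: "'a::{linorder, ordered_ab_semigroup_add}"
  assumes "s \<le> t"
  shows "max t u + s \<le> max s u + t"
proof -
  have "t + s \<le> max s u + t"
    by (metis add.commute add_right_mono max.cobounded1)
  moreover have "u + s \<le> max s u + t"
    using assms by (intro add_mono) simp_all
  ultimately show ?thesis
    by (metis max.absorb1 max.absorb2 nle_le)
qed

lemma cover_phi_submodular:
  assumes "S \<subseteq> T"
  shows "cover_phi X (T \<union> U) \<omega> + cover_phi X S \<omega> \<le> cover_phi X (S \<union> U) \<omega> + cover_phi X T \<omega>"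
  unfolding cover_phi_Un by (rule max_add_le) (rule cover_phi_mono[OF assms])

lemma cover_time_mono: "S \<subseteq> T \<Longrightarrow> cover_time M X S \<le> cover_time M X T"
  unfolding cover_time_eq_nn_integral by (intro nn_integral_mono cover_phi_mono)

lemma cover_time_submodular:
  assumes X: "\<And>j. j \<ge> 1 \<Longrightarrow> X j \<in> M \<rightarrow>\<^sub>M count_space V"
    and "finite T" "finite U" "S \<subseteq> T"
  shows "cover_time M X (T \<union> U) + cover_time M X S \<le> cover_time M X (S \<union> U) + cover_time M X T"
proof -
  have meas: "cover_phi X A \<in> borel_measurable M" if "A \<subseteq> T \<union> U" for A
    using X finite_subset[OF that] assms(2,3) by (intro borel_measurable_cover_phi) auto
  have "cover_time M X (T \<union> U) + cover_time M X S
      = (\<integral>\<^sup>+ \<omega>. cover_phi X (T \<union> U) \<omega> + cover_phi X S \<omega> \<partial>M)"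
    unfolding cover_time_eq_nn_integral using assms(4) by (intro nn_integral_add[symmetric] meas) auto
  also have "\<dots> \<le> (\<integral>\<^sup>+ \<omega>. cover_phi X (S \<union> U) \<omega> + cover_phi X T \<omega> \<partial>M)"
    by (intro nn_integral_mono cover_phi_submodular assms(4))
  also have "\<dots> = cover_time M X (S \<union> U) + cover_time M X T"
    unfolding cover_time_eq_nn_integral using assms(4) by (intro nn_integral_add meas) auto
  finally show ?thesis .
qed

theorem proposition7:
  fixes M :: "'w measure" and X :: "nat \<Rightarrow> 'w \<Rightarrow> 'v" and V :: "'v set"
    and \<pi> :: "'v measure"
  assumes "prob_space M"
    and "finite V"
    and "\<And>k. k \<ge> 1 \<Longrightarrow> X k \<in> measurable M (count_space V)"
    and "distr M (count_space V) (X 1) = \<pi>"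
    and "cover_time M X V < \<infinity>"
  shows "(\<forall>S T. S \<subseteq> T \<and> T \<subseteq> V \<longrightarrow> cover_time M X S \<le> cover_time M X T)
     \<and> (\<forall>S T v. S \<subseteq> T \<and> T \<subseteq> V \<and> v \<in> V - T \<longrightarrow>
          enn2real (cover_time M X (S \<union> {v})) - enn2real (cover_time M X S)
            \<ge> enn2real (cover_time M X (T \<union> {v})) - enn2real (cover_time M X T))"
proof -
  have finite_time: "cover_time M X A < \<infinity>" if "A \<subseteq> V" for A
    using cover_time_mono[OF that] assms(5) by (rule le_less_trans)
  have "enn2real (cover_time M X (T \<union> {v})) - enn2real (cover_time M X T)
      \<le> enn2real (cover_time M X (S \<union> {v})) - enn2real (cover_time M X S)"
    if "S \<subseteq> T" "T \<subseteq> V" "v \<in> V - T" for S T v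
  proof -
    have subsets: "T \<union> {v} \<subseteq> V" "S \<union> {v} \<subseteq> V" "S \<subseteq> V"
      using that by auto
    with that finite_time have "enn2real (cover_time M X (T \<union> {v}) + cover_time M X S)
        \<le> enn2real (cover_time M X (S \<union> {v}) + cover_time M X T)"
      by (intro enn2real_mono cover_time_submodular[OF assms(3)] finite_subset[OF _ assms(2)])
        (auto intro: ennreal_add_less_top)
    with that subsets finite_time show ?thesis
      by (simp add: enn2real_plus)
  qed
  then show ?thesis
    using cover_time_mono by blast
qed

end
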